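(* Let $\chi_1,\dots,\chi_n,\hbar,q_1,\dots,q_n$ be indeterminates and work in the field of rational functions over $\mathbb C$. Let $M(\chi)$ be the $2n\times2n$ block matrix $\begin{bmatrix}P&Q\\S&U\end{bmatrix}$ with $n\times n$ blocks: $P_{ii}=\chi_i$, $P_{ij}=\frac{\hbar}{1-q_i/q_j}$ ($i\ne j$); $U_{ii}=-\chi_{n+1-i}$, $U_{ij}=\frac{\hbar}{1-q_{n+1-j}/q_{n+1-i}}$ ($i\ne j$); $Q_{ij}=\frac{\hbar}{1-q_iq_{n+1-j}}$ if $i+j\ne n+1$ and $Q_{ij}=0$ if $i+j=n+1$; $S_{ij}=\frac{\hbar}{1-q_{n+1-i}^{-1}q_j^{-1}}$ if $i+j\ne n+1$ and $S_{ij}=0$ if $i+j=n+1$. Let $A(\chi)$ be the $n\times n$ matrix with $A_{ii}=\chi_i$ and $$A_{ij}=\frac{\hbar(1-q_i)(1+q_j)}{(1-q_i/q_j)(1-q_iq_j)}\quad(i\ne j),$$ and $A(-\chi)$ the same matrix with each $\chi_i$ replaced by $-\chi_i$. Then $$\det M(\chi)=\det A(\chi)\cdot\det A(-\chi).$$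
   Context: In the paper $M(\chi)$ is the matrix $\Theta(-\mathbf e_1)$ for type $D_n$ and $\chi_i=\Delta_{-\mathbf e_i}$; the identity is a formal one. *)

theory Defs
  imports "Jordan_Normal_Form.Determinant"
begin

text \<open>Indices are 0-based: the paper's index i in 1..n is i-1 here, so the paper's
  n+1-i becomes n-1-i.\<close>

definition blkP :: "nat \<Rightarrow> (nat \<Rightarrow> complex) \<Rightarrow> complex \<Rightarrow> (nat \<Rightarrow> complex) \<Rightarrow> complex mat" where
  "blkP n chi h q = mat n n (\<lambda>(i,j). if i = j then chi i else h / (1 - q i / q j))"

definition blkU :: "nat \<Rightarrow> (nat \<Rightarrow> complex) \<Rightarrow> complex \<Rightarrow> (nat \<Rightarrow> complex) \<Rightarrow> complex mat" where
  "blkU n chi h q = mat n n (\<lambda>(i,j). if i = j then - chi (n - 1 - i)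
      else h / (1 - q (n - 1 - j) / q (n - 1 - i)))"

definition blkQ :: "nat \<Rightarrow> complex \<Rightarrow> (nat \<Rightarrow> complex) \<Rightarrow> complex mat" where
  "blkQ n h q = mat n n (\<lambda>(i,j). if i + j = n - 1 then 0
      else h / (1 - q i * q (n - 1 - j)))"

definition blkS :: "nat \<Rightarrow> complex \<Rightarrow> (nat \<Rightarrow> complex) \<Rightarrow> complex mat" where
  "blkS n h q = mat n n (\<lambda>(i,j). if i + j = n - 1 then 0
      else h / (1 - inverse (q (n - 1 - i)) * inverse (q j)))"

definition matM :: "nat \<Rightarrow> (nat \<Rightarrow> complex) \<Rightarrow> complex \<Rightarrow> (nat \<Rightarrow> complex) \<Rightarrow> complex mat" where
  "matM n chi h q = four_block_mat (blkP n chi h q) (blkQ n h q) (blkS n h q) (blkU n chi h q)"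

definition matA :: "nat \<Rightarrow> (nat \<Rightarrow> complex) \<Rightarrow> complex \<Rightarrow> (nat \<Rightarrow> complex) \<Rightarrow> complex mat" where
  "matA n chi h q = mat n n (\<lambda>(i,j). if i = j then chi i
      else h * (1 - q i) * (1 + q j) / ((1 - q i / q j) * (1 - q i * q j)))"

end

theory Submission imports Defs begin

text \<open>Let \<open>J\<close> be the exchange matrix. Multiplying \<open>M = [P Q; S U]\<close> on both sides by the
  unimodular matrix \<open>[1 0; -J 1]\<close> makes it block upper triangular: the lower left block
  vanishes entrywise because \<open>h/(1 - x/y) + h/(1 - y/x) = h = h/(1 - x y) + h/(1 - 1/(x y))\<close>.
  The diagonal blocks are \<open>B(\<chi>) = P - Q J\<close> and \<open>J B(-\<chi>)\<^sup>T J\<close>. Finally \<open>B(\<chi>)\<close> and \<open>A(\<chi>)\<close> have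
  the same diagonal and off-diagonal entries \<open>u\<^sub>i v\<^sub>j c\<^sub>i\<^sub>j\<close> and \<open>u'\<^sub>i v'\<^sub>j c\<^sub>i\<^sub>j\<close> with \<open>u\<^sub>i v\<^sub>i = u'\<^sub>i v'\<^sub>i\<close>;
  along the cycles of a permutation the factors \<open>u\<close> and \<open>v\<close> pair up, so every term of the
  Leibniz expansion agrees (a diagonal conjugation that needs no invertibility).\<close>

lemma prod_perm_offdiag_factor:
  fixes X :: "'a::comm_ring_1 mat"
  assumes p: "p permutes {0..<n}"
    and off: "\<And>i j. i < n \<Longrightarrow> j < n \<Longrightarrow> i \<noteq> j \<Longrightarrow> X $$ (i, j) = u i * v j * c i j"
  shows "(\<Prod>i=0..<n. X $$ (i, p i)) =
    (\<Prod>i=0..<n. if p i = i then X $$ (i, i) else c i (p i)) *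
    (\<Prod>i=0..<n. if p i = i then 1 else u i * v i)"
proof -
  have p_less: "i < n \<Longrightarrow> p i < n" for i
    using p permutes_in_image by fastforce
  have "inj p" using p by (rule permutes_inj)
  define g where "g j = (if p j = j then 1 else v j)" for j
  have "(\<Prod>i=0..<n. X $$ (i, p i)) = (\<Prod>i=0..<n.
      (if p i = i then X $$ (i, i) else c i (p i)) * ((if p i = i then 1 else u i) * g (p i)))"
  proof (rule prod.cong[OF refl])
    fix i assume "i \<in> {0..<n}"
    moreover have "p (p i) = p i \<longleftrightarrow> p i = i" using \<open>inj p\<close> by (auto dest: injD)
    ultimately show "X $$ (i, p i) = (if p i = i then X $$ (i, i) else c i (p i)) *
        ((if p i = i then 1 else u i) * g (p i))"
      using off p_less by (auto simp: g_def mult_ac)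
  qed
  also have "\<dots> = (\<Prod>i=0..<n. if p i = i then X $$ (i, i) else c i (p i)) *
      ((\<Prod>i=0..<n. if p i = i then 1 else u i) * (\<Prod>i=0..<n. g (p i)))"
    by (simp add: prod.distrib)
  also have "(\<Prod>i=0..<n. g (p i)) = (\<Prod>i=0..<n. g i)"
    using prod.permute[OF p, of g] by (simp add: comp_def)
  also have "(\<Prod>i=0..<n. if p i = i then 1 else u i) * (\<Prod>i=0..<n. g i) =
      (\<Prod>i=0..<n. if p i = i then 1 else u i * v i)"
    unfolding g_def prod.distrib[symmetric] by (rule prod.cong) auto
  finally show ?thesis .
qed

lemma det_eq_if_offdiag_rescaled:
  fixes X Y :: "'a::comm_ring_1 mat"
  assumes X: "X \<in> carrier_mat n n" and Y: "Y \<in> carrier_mat n n"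
    and offX: "\<And>i j. i < n \<Longrightarrow> j < n \<Longrightarrow> i \<noteq> j \<Longrightarrow> X $$ (i, j) = u i * v j * c i j"
    and offY: "\<And>i j. i < n \<Longrightarrow> j < n \<Longrightarrow> i \<noteq> j \<Longrightarrow> Y $$ (i, j) = u' i * v' j * c i j"
    and diag: "\<And>i. i < n \<Longrightarrow> X $$ (i, i) = Y $$ (i, i)"
    and uv: "\<And>i. i < n \<Longrightarrow> u i * v i = u' i * v' i"
  shows "det X = det Y"
  unfolding det_def'[OF X] det_def'[OF Y]
proof (rule sum.cong[OF refl])
  fix p assume "p \<in> {p. p permutes {0..<n}}"
  then have p: "p permutes {0..<n}" by simp
  have "(\<Prod>i=0..<n. if p i = i then X $$ (i, i) else c i (p i)) =
      (\<Prod>i=0..<n. if p i = i then Y $$ (i, i) else c i (p i))"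
    by (rule prod.cong) (use diag in auto)
  moreover have "(\<Prod>i=0..<n. if p i = i then 1 else u i * v i) =
      (\<Prod>i=0..<n. if p i = i then 1 else u' i * v' i)"
    by (rule prod.cong) (use uv in auto)
  moreover have "(\<Prod>i=0..<n. X $$ (i, p i)) =
      (\<Prod>i=0..<n. if p i = i then X $$ (i, i) else c i (p i)) *
      (\<Prod>i=0..<n. if p i = i then 1 else u i * v i)"
    by (rule prod_perm_offdiag_factor[OF p]) (simp add: offX)
  moreover have "(\<Prod>i=0..<n. Y $$ (i, p i)) =
      (\<Prod>i=0..<n. if p i = i then Y $$ (i, i) else c i (p i)) *
      (\<Prod>i=0..<n. if p i = i then 1 else u' i * v' i)"
    by (rule prod_perm_offdiag_factor[OF p]) (simp add: offY)
  ultimately show "signof p * (\<Prod>i=0..<n. X $$ (i, p i)) = signof p * (\<Prod>i=0..<n. Y $$ (i, p i))"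
    by simp
qed

lemma det_four_block_mat_by_elimination:
  fixes P Q S U R :: "'a::idom mat"
  assumes P: "P \<in> carrier_mat n n" and Q: "Q \<in> carrier_mat n n"
    and S: "S \<in> carrier_mat n n" and U: "U \<in> carrier_mat n n"
    and R: "R \<in> carrier_mat n n"
    and elim: "R * (P + Q * R) + (S + U * R) = 0\<^sub>m n n"
  shows "det (four_block_mat P Q S U) = det (P + Q * R) * det (R * Q + U)"
proof -
  define T where "T = four_block_mat (1\<^sub>m n) (0\<^sub>m n n) R (1\<^sub>m n)"
  define M where "M = four_block_mat P Q S U"
  have T: "T \<in> carrier_mat (n + n) (n + n)" and M: "M \<in> carrier_mat (n + n) (n + n)"
    using P Q S U R by (auto simp: T_def M_def)
  have "det T = 1"
    unfolding T_def by (subst det_four_block_mat_upper_right_zero[of _ n _ n]) (use R in auto)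
  have MT: "M * T = four_block_mat (P + Q * R) Q (S + U * R) U"
    unfolding M_def T_def
    by (subst mult_four_block_mat[OF P Q S U one_carrier_mat zero_carrier_mat R one_carrier_mat])
      (use P Q S U R in auto)
  have X11: "P + Q * R \<in> carrier_mat n n" and X21: "S + U * R \<in> carrier_mat n n"
    using P Q S U R by auto
  have "T * (M * T) = four_block_mat (P + Q * R) Q (R * (P + Q * R) + (S + U * R)) (R * Q + U)"
    unfolding MT unfolding T_def
    by (subst mult_four_block_mat[OF one_carrier_mat zero_carrier_mat R one_carrier_mat X11 Q X21 U])
      (use X11 Q X21 U R in auto)
  then have "T * (M * T) = four_block_mat (P + Q * R) Q (0\<^sub>m n n) (R * Q + U)"
    by (simp only: elim)
  then have "det (T * (M * T)) = det (P + Q * R) * det (R * Q + U)"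
    using P Q U R by (simp add: det_four_block_mat_lower_left_zero[of _ n _ n])
  moreover have "det (T * (M * T)) = det M"
    using det_mult[OF T mult_carrier_mat[OF M T]] det_mult[OF M T] \<open>det T = 1\<close> by simp
  ultimately show ?thesis by (simp add: M_def)
qed

definition antidiag_mat :: "nat \<Rightarrow> 'a::zero \<Rightarrow> 'a mat" where
  "antidiag_mat n c = mat n n (\<lambda>(i, j). if i + j = n - 1 then c else 0)"

lemma antidiag_mat_carrier [simp]: "antidiag_mat n c \<in> carrier_mat n n"
  by (simp add: antidiag_mat_def)

lemma dim_antidiag_mat [simp]: "dim_row (antidiag_mat n c) = n" "dim_col (antidiag_mat n c) = n"
  by (simp_all add: antidiag_mat_def)

lemma index_mult_antidiag_mat:
  fixes X :: "'a::comm_semiring_1 mat"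
  assumes "X \<in> carrier_mat m n" and "i < m" and "j < n"
  shows "(X * antidiag_mat n c) $$ (i, j) = c * X $$ (i, n - 1 - j)"
proof -
  have "(X * antidiag_mat n c) $$ (i, j) = (\<Sum>k=0..<n. X $$ (i, k) * (if k = n - 1 - j then c else 0))"
    using assms by (auto simp: antidiag_mat_def scalar_prod_def intro!: sum.cong)
  also have "\<dots> = c * X $$ (i, n - 1 - j)"
    using \<open>j < n\<close> by (simp add: sum.delta' if_distrib mult.commute cong: if_cong)
  finally show ?thesis .
qed

lemma index_antidiag_mat_mult:
  fixes X :: "'a::semiring_1 mat"
  assumes "X \<in> carrier_mat n m" and "i < n" and "j < m"
  shows "(antidiag_mat n c * X) $$ (i, j) = c * X $$ (n - 1 - i, j)"
proof -
  have "(antidiag_mat n c * X) $$ (i, j) = (\<Sum>k=0..<n. (if i + k = n - 1 then c else 0) * X $$ (k, j))"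
    using assms by (simp add: antidiag_mat_def scalar_prod_def)
  also have "\<dots> = (\<Sum>k=0..<n. if k = n - 1 - i then c * X $$ (k, j) else 0)"
    by (rule sum.cong) (use \<open>i < n\<close> in auto)
  also have "\<dots> = c * X $$ (n - 1 - i, j)"
    using \<open>i < n\<close> by (simp add: sum.delta')
  finally show ?thesis .
qed

lemma antidiag_mat_one_squared: "antidiag_mat n 1 * antidiag_mat n (1::'a::semiring_1) = 1\<^sub>m n"
proof (rule eq_matI)
  fix i j assume "i < dim_row (1\<^sub>m n :: 'a mat)" "j < dim_col (1\<^sub>m n :: 'a mat)"
  then have "i < n" "j < n" by auto
  moreover have "(antidiag_mat n 1 * antidiag_mat n 1) $$ (i, j) = 1 * (antidiag_mat n 1 :: 'a mat) $$ (n - 1 - i, j)"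
    using \<open>i < n\<close> \<open>j < n\<close> by (rule index_antidiag_mat_mult[OF antidiag_mat_carrier])
  ultimately show "(antidiag_mat n 1 * antidiag_mat n 1) $$ (i, j) = (1\<^sub>m n :: 'a mat) $$ (i, j)"
    by (auto simp: antidiag_mat_def)
qed (simp_all add: antidiag_mat_def)

lemma det_antidiag_mat_conj:
  fixes N :: "'a::comm_ring_1 mat"
  assumes N: "N \<in> carrier_mat n n"
  shows "det (antidiag_mat n 1 * N * antidiag_mat n 1) = det N"
proof -
  let ?J = "antidiag_mat n (1::'a)"
  have "det (?J * N * ?J) = det ?J * det N * det ?J"
    using det_mult[OF mult_carrier_mat[OF antidiag_mat_carrier N] antidiag_mat_carrier]
      det_mult[OF antidiag_mat_carrier N] by simp
  also have "\<dots> = det (?J * ?J) * det N"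
    by (simp add: det_mult[OF antidiag_mat_carrier antidiag_mat_carrier])
  finally show ?thesis by (simp add: antidiag_mat_one_squared)
qed

lemma div_one_minus_div_add_swap:
  fixes x y h :: "'a::field"
  assumes "x \<noteq> 0" "y \<noteq> 0" "x \<noteq> y"
  shows "h / (1 - x / y) + h / (1 - y / x) = h"
proof -
  have "y - x \<noteq> 0" using assms by simp
  have "1 - x / y = (y - x) / y" "1 - y / x = - ((y - x) / x)"
    using assms by (simp_all add: field_simps)
  then have "h / (1 - x / y) + h / (1 - y / x) = h * y / (y - x) - h * x / (y - x)"
    by simp
  also have "\<dots> = h * (y - x) / (y - x)" by (simp add: diff_divide_distrib right_diff_distrib)
  also have "\<dots> = h" using \<open>y - x \<noteq> 0\<close> by simp
  finally show ?thesis .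
qed

lemma div_one_minus_mult_add_inverse:
  fixes x y h :: "'a::field"
  assumes "x \<noteq> 0" "y \<noteq> 0" "x * y \<noteq> 1"
  shows "h / (1 - x * y) + h / (1 - inverse x * inverse y) = h"
proof -
  have "1 - x * y \<noteq> 0" using assms by simp
  have "1 - inverse x * inverse y = - ((1 - x * y) / (x * y))"
    using assms by (simp add: field_simps)
  then have "h / (1 - x * y) + h / (1 - inverse x * inverse y) = h / (1 - x * y) - h * (x * y) / (1 - x * y)"
    by simp
  also have "\<dots> = h * (1 - x * y) / (1 - x * y)" by (simp add: diff_divide_distrib right_diff_distrib)
  also have "\<dots> = h" using \<open>1 - x * y \<noteq> 0\<close> by simp
  finally show ?thesis .
qed

definition matB :: "nat \<Rightarrow> (nat \<Rightarrow> complex) \<Rightarrow> complex \<Rightarrow> (nat \<Rightarrow> complex) \<Rightarrow> complex mat" where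
  "matB n d h q = mat n n (\<lambda>(i, j). if i = j then d i
      else h / (1 - q i / q j) - h / (1 - q i * q j))"

lemma det_matB_eq_det_matA:
  assumes q0: "\<forall>i<n. q i \<noteq> 0"
    and qd: "\<forall>i<n. \<forall>j<n. i \<noteq> j \<longrightarrow> q i \<noteq> q j"
    and qp: "\<forall>i<n. \<forall>j<n. i \<noteq> j \<longrightarrow> q i * q j \<noteq> 1"
  shows "det (matB n d h q) = det (matA n d h q)"
proof (rule det_eq_if_offdiag_rescaled[where c = "\<lambda>i j. 1 / ((q j - q i) * (1 - q i * q j))"
      and u = "\<lambda>i. h * q i" and v = "\<lambda>j. 1 - q j ^ 2"
      and u' = "\<lambda>i. h * (1 - q i)" and v' = "\<lambda>j. q j * (1 + q j)"])
  fix i j assume ij: "i < n" "j < n" "i \<noteq> j"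
  then have "q i \<noteq> 0" "q j \<noteq> 0" "q j - q i \<noteq> 0" "1 - q i * q j \<noteq> 0"
    using q0 qd qp by auto
  moreover have "1 - q i / q j = (q j - q i) / q j"
    using \<open>q j \<noteq> 0\<close> by (simp add: field_simps)
  ultimately show "matB n d h q $$ (i, j) = h * q i * (1 - q j ^ 2) * (1 / ((q j - q i) * (1 - q i * q j)))"
    and "matA n d h q $$ (i, j) = h * (1 - q i) * (q j * (1 + q j)) * (1 / ((q j - q i) * (1 - q i * q j)))"
    using ij by (simp_all add: matB_def matA_def field_simps power2_eq_square)
qed (auto simp: matB_def matA_def power2_eq_square algebra_simps)

lemma blk_carrier [simp]:
  "blkP n chi h q \<in> carrier_mat n n" "blkQ n h q \<in> carrier_mat n n"
  "blkS n h q \<in> carrier_mat n n" "blkU n chi h q \<in> carrier_mat n n"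
  "matB n chi h q \<in> carrier_mat n n"
  by (simp_all add: blkP_def blkQ_def blkS_def blkU_def matB_def)

lemma dim_blk [simp]:
  "dim_row (blkP n chi h q) = n" "dim_col (blkP n chi h q) = n"
  "dim_row (blkQ n h q) = n" "dim_col (blkQ n h q) = n"
  "dim_row (blkS n h q) = n" "dim_col (blkS n h q) = n"
  "dim_row (blkU n chi h q) = n" "dim_col (blkU n chi h q) = n"
  "dim_row (matB n chi h q) = n" "dim_col (matB n chi h q) = n"
  by (simp_all add: blkP_def blkQ_def blkS_def blkU_def matB_def)

lemma blkP_add_blkQ_mult_antidiag: "blkP n chi h q + blkQ n h q * antidiag_mat n (-1) = matB n chi h q"
proof (rule eq_matI)
  fix i j assume "i < dim_row (matB n chi h q)" "j < dim_col (matB n chi h q)"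
  then have ij: "i < n" "j < n" by (auto simp: matB_def)
  then have "(blkP n chi h q + blkQ n h q * antidiag_mat n (-1)) $$ (i, j) =
      blkP n chi h q $$ (i, j) - blkQ n h q $$ (i, n - 1 - j)"
    by (simp add: index_mult_antidiag_mat[OF blk_carrier(2)] del: index_mult_mat(1))
  then show "(blkP n chi h q + blkQ n h q * antidiag_mat n (-1)) $$ (i, j) = matB n chi h q $$ (i, j)"
    using ij by (auto simp: blkP_def blkQ_def matB_def)
qed (auto simp: matB_def)

lemma antidiag_mult_blkQ_add_blkU:
  "antidiag_mat n (-1) * blkQ n h q + blkU n chi h q =
    antidiag_mat n 1 * transpose_mat (matB n (\<lambda>i. - chi i) h q) * antidiag_mat n 1"
  (is "?L = ?J * ?N * ?J")
proof (rule eq_matI)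
  fix i j assume "i < dim_row (?J * ?N * ?J)" "j < dim_col (?J * ?N * ?J)"
  then have ij: "i < n" "j < n" by auto
  have N: "?N \<in> carrier_mat n n" by (simp add: matB_def)
  have "(?J * ?N * ?J) $$ (i, j) = 1 * (?J * ?N) $$ (i, n - 1 - j)"
    using ij by (rule index_mult_antidiag_mat[OF mult_carrier_mat[OF antidiag_mat_carrier N]])
  also have "\<dots> = matB n (\<lambda>i. - chi i) h q $$ (n - 1 - j, n - 1 - i)"
    using ij by (simp add: index_antidiag_mat_mult[OF N] del: index_mult_mat(1))
  finally have "(?J * ?N * ?J) $$ (i, j) = matB n (\<lambda>i. - chi i) h q $$ (n - 1 - j, n - 1 - i)" .
  moreover have "?L $$ (i, j) = blkU n chi h q $$ (i, j) - blkQ n h q $$ (n - 1 - i, j)"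
    using ij by (simp add: index_antidiag_mat_mult[OF blk_carrier(2)] del: index_mult_mat(1))
  ultimately show "?L $$ (i, j) = (?J * ?N * ?J) $$ (i, j)"
    using ij by (auto simp: blkQ_def blkU_def matB_def)
qed auto

lemma antidiag_mult_matB_add_blkS_blkU_eq_0:
  assumes q0: "\<forall>i<n. q i \<noteq> 0"
    and qd: "\<forall>i<n. \<forall>j<n. i \<noteq> j \<longrightarrow> q i \<noteq> q j"
    and qp: "\<forall>i<n. \<forall>j<n. i \<noteq> j \<longrightarrow> q i * q j \<noteq> 1"
  shows "antidiag_mat n (-1) * matB n chi h q + (blkS n h q + blkU n chi h q * antidiag_mat n (-1)) = 0\<^sub>m n n"
    (is "?L = _")
proof (rule eq_matI)
  fix i j assume "i < dim_row (0\<^sub>m n n :: complex mat)" "j < dim_col (0\<^sub>m n n :: complex mat)"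
  then have ij: "i < n" "j < n" by auto
  define a where "a = n - 1 - i"
  have a: "a < n" "n - 1 - a = i" "n - Suc i = a" using ij by (auto simp: a_def)
  have "?L $$ (i, j) = blkS n h q $$ (i, j) - blkU n chi h q $$ (i, n - 1 - j) - matB n chi h q $$ (a, j)"
    using ij by (simp add: a_def index_antidiag_mat_mult[OF blk_carrier(5)]
        index_mult_antidiag_mat[OF blk_carrier(4)] del: index_mult_mat(1))
  also have "\<dots> = 0"
  proof (cases "a = j")
    case True
    then show ?thesis using a ij by (auto simp: blkS_def blkU_def matB_def)
  next
    case False
    then have "q a \<noteq> 0" "q j \<noteq> 0" "q a \<noteq> q j" "q a * q j \<noteq> 1"
      using q0 qd qp a ij by auto
    moreover have "i + j \<noteq> n - 1" "i \<noteq> n - 1 - j"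
      using False a ij by auto
    ultimately have "blkS n h q $$ (i, j) - blkU n chi h q $$ (i, n - 1 - j) - matB n chi h q $$ (a, j) =
        (h / (1 - q a * q j) + h / (1 - inverse (q a) * inverse (q j))) -
        (h / (1 - q a / q j) + h / (1 - q j / q a))"
      using a ij False by (simp add: blkS_def blkU_def matB_def algebra_simps)
    also have "\<dots> = 0"
      using \<open>q a \<noteq> 0\<close> \<open>q j \<noteq> 0\<close> \<open>q a \<noteq> q j\<close> \<open>q a * q j \<noteq> 1\<close>
      by (simp add: div_one_minus_div_add_swap div_one_minus_mult_add_inverse)
    finally show ?thesis .
  qed
  finally show "?L $$ (i, j) = 0\<^sub>m n n $$ (i, j)" using ij by simp
qed auto

theorem mainTheorem15:
  fixes n :: nat and chi q :: "nat \<Rightarrow> complex" and h :: complex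
  assumes "\<forall>i<n. q i \<noteq> 0"
    and "\<forall>i<n. \<forall>j<n. i \<noteq> j \<longrightarrow> q i \<noteq> q j"
    and "\<forall>i<n. \<forall>j<n. i \<noteq> j \<longrightarrow> q i * q j \<noteq> 1"
  shows "det (matM n chi h q) = det (matA n chi h q) * det (matA n (\<lambda>i. - chi i) h q)"
proof -
  have "det (matM n chi h q) = det (matB n chi h q) *
      det (antidiag_mat n (-1) * blkQ n h q + blkU n chi h q)"
    unfolding matM_def blkP_add_blkQ_mult_antidiag[symmetric]
    by (rule det_four_block_mat_by_elimination[of _ n])
      (simp_all add: blkP_add_blkQ_mult_antidiag antidiag_mult_matB_add_blkS_blkU_eq_0[OF assms])
  also have "det (antidiag_mat n (-1) * blkQ n h q + blkU n chi h q) = det (matB n (\<lambda>i. - chi i) h q)"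
    unfolding antidiag_mult_blkQ_add_blkU
      det_antidiag_mat_conj[OF transpose_carrier_mat[THEN iffD2, OF blk_carrier(5)]]
    by (rule det_transpose[OF blk_carrier(5)])
  finally show ?thesis
    by (simp add: det_matB_eq_det_matA[OF assms])
qed

end
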